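(* Let $X$ be a Hausdorff space all of whose finite powers are Lindel\"of. If for every positive integer $k$ the polarized partition relation $\left(\begin{array}{c}\Omega\\ \Omega\end{array}\right)\longrightarrow\left[\begin{array}{c}\Omega\\ \Omega\end{array}\right]^{1,1}_{k/<3}$ holds for $X$, then $X$ has the property $\textsf{Split}(\Omega,\Omega)$.
   Context: $\Omega$: the $\omega$-covers of $X$ (open covers $\mathcal{U}$ with $X\notin\mathcal{U}$ such that each finite subset of $X$ lies in some member). The relation $\left(\begin{array}{c}\Omega\\ \Omega\end{array}\right)\longrightarrow\left[\begin{array}{c}\Omega\\ \Omega\end{array}\right]^{1,1}_{k/<3}$ means: for all $\mathcal{U}_1,\mathcal{U}_2\in\Omega$ and every $f:\mathcal{U}_1\times\mathcal{U}_2\to\{1,\dots,k\}$ there are $\mathcal{B}_1\subseteq\mathcal{U}_1$ and $\mathcal{B}_2\subseteq\mathcal{U}_2$ with $\mathcal{B}_1,\mathcal{B}_2\in\Omega$ such that $f$ takes fewer than $3$ distinct values on $\mathcal{B}_1\times\mathcal{B}_2$. $\textsf{Split}(\Omega,\Omega)$: for every $\omega$-cover $\mathcal{U}$ there are $\omega$-covers $\mathcal{B}_1,\mathcal{B}_2$ with $\mathcal{B}_1\cap\mathcal{B}_2=\emptyset$ and $\mathcal{B}_1\cup\mathcal{B}_2=\mathcal{U}$. *)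

theory Defs
  imports "HOL-Analysis.Analysis"
begin

definition omega_cover :: "'a topology \<Rightarrow> 'a set set \<Rightarrow> bool" where
  "omega_cover X \<U> \<longleftrightarrow>
     (\<forall>U\<in>\<U>. openin X U) \<and> \<Union>\<U> = topspace X \<and> topspace X \<notin> \<U> \<and>
     (\<forall>F. finite F \<and> F \<subseteq> topspace X \<longrightarrow> (\<exists>U\<in>\<U>. F \<subseteq> U))"

definition polarized_Omega_k_lt3 :: "'a topology \<Rightarrow> nat \<Rightarrow> bool" where
  "polarized_Omega_k_lt3 X k \<longleftrightarrow>
     (\<forall>\<U>1 \<U>2 (f :: 'a set \<times> 'a set \<Rightarrow> nat).
        omega_cover X \<U>1 \<and> omega_cover X \<U>2 \<and> f ` (\<U>1 \<times> \<U>2) \<subseteq> {1..k} \<longrightarrow>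
        (\<exists>\<B>1 \<B>2. \<B>1 \<subseteq> \<U>1 \<and> \<B>2 \<subseteq> \<U>2 \<and> omega_cover X \<B>1 \<and> omega_cover X \<B>2 \<and>
                  card (f ` (\<B>1 \<times> \<B>2)) < 3))"

definition Split_Omega_Omega :: "'a topology \<Rightarrow> bool" where
  "Split_Omega_Omega X \<longleftrightarrow>
     (\<forall>\<U>. omega_cover X \<U> \<longrightarrow>
        (\<exists>\<B>1 \<B>2. omega_cover X \<B>1 \<and> omega_cover X \<B>2 \<and>
                  \<B>1 \<inter> \<B>2 = {} \<and> \<B>1 \<union> \<B>2 = \<U>))"

end

theory Submission imports Defs begin

text \<open>Colour a pair (A, B) of members of the cover by whether A precedes, equals or follows B
  in a fixed well-ordering. Any rectangle B1 \<times> B2 on which at most two colours occur can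
  share at most one member between its sides: two distinct common members a, b would
  produce all three colours at (a, a), (a, b), (b, a). Removing that member from B1 leaves an
  \<omega>-cover disjoint from B2, and its complement in the original cover contains B2, so it
  is an \<omega>-cover as well.\<close>

lemma omega_coverD:
  assumes "omega_cover X \<U>"
  shows "\<And>U. U \<in> \<U> \<Longrightarrow> openin X U" "\<Union>\<U> = topspace X" "topspace X \<notin> \<U>"
    and "\<And>F. finite F \<Longrightarrow> F \<subseteq> topspace X \<Longrightarrow> \<exists>U\<in>\<U>. F \<subseteq> U"
  using assms unfolding omega_cover_def by auto

lemma omega_coverI:
  assumes "\<And>U. U \<in> \<U> \<Longrightarrow> openin X U" "\<Union>\<U> \<subseteq> topspace X" "topspace X \<notin> \<U>"
    and "\<And>F. finite F \<Longrightarrow> F \<subseteq> topspace X \<Longrightarrow> \<exists>U\<in>\<U>. F \<subseteq> U"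
  shows "omega_cover X \<U>"
proof -
  have "topspace X \<subseteq> \<Union>\<U>"
  proof
    fix x assume "x \<in> topspace X"
    then show "x \<in> \<Union>\<U>"
      using assms(4)[of "{x}"] by blast
  qed
  then have "\<Union>\<U> = topspace X"
    using assms(2) by (rule subset_antisym[rotated])
  then show ?thesis
    unfolding omega_cover_def using assms(1,3,4) by simp
qed

lemma omega_cover_Diff_singleton:
  assumes \<U>: "omega_cover X \<U>"
  shows "omega_cover X (\<U> - {C})"
proof (rule omega_coverI)
  show "\<exists>U\<in>\<U> - {C}. F \<subseteq> U" if F: "finite F" "F \<subseteq> topspace X" for F
  proof (cases "C \<in> \<U>")
    case True
    then have "C \<subseteq> topspace X" "C \<noteq> topspace X"
      using omega_coverD(2,3)[OF \<U>] by blast+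
    then obtain y where y: "y \<in> topspace X" "y \<notin> C"
      by blast
    \<comment> \<open>a member containing the enlarged set insert y F cannot be C\<close>
    then obtain U where "U \<in> \<U>" "insert y F \<subseteq> U"
      using omega_coverD(4)[OF \<U>, of "insert y F"] F by auto
    with y show ?thesis
      by blast
  next
    case False
    then show ?thesis
      using omega_coverD(4)[OF \<U> F] by blast
  qed
  show "openin X U" if "U \<in> \<U> - {C}" for U
    using omega_coverD(1)[OF \<U>] that by blast
  show "\<Union>(\<U> - {C}) \<subseteq> topspace X"
    using omega_coverD(2)[OF \<U>] by blast
  show "topspace X \<notin> \<U> - {C}"
    using omega_coverD(3)[OF \<U>] by blast
qed

lemma omega_cover_intermediate:
  assumes "omega_cover X \<B>" "omega_cover X \<U>" "\<B> \<subseteq> \<C>" "\<C> \<subseteq> \<U>"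
  shows "omega_cover X \<C>"
proof (rule omega_coverI)
  show "\<exists>U\<in>\<C>. F \<subseteq> U" if "finite F" "F \<subseteq> topspace X" for F
    using omega_coverD(4)[OF assms(1) that] assms(3) by blast
  show "openin X U" if "U \<in> \<C>" for U
    using omega_coverD(1)[OF assms(2)] assms(4) that by blast
  show "\<Union>\<C> \<subseteq> topspace X"
    using omega_coverD(2)[OF assms(2)] assms(4) by blast
  show "topspace X \<notin> \<C>"
    using omega_coverD(3)[OF assms(2)] assms(4) by blast
qed

lemma omega_cover_split_if_Int_subset_singleton:
  assumes \<U>: "omega_cover X \<U>"
    and \<B>: "omega_cover X \<B>1" "omega_cover X \<B>2" "\<B>1 \<subseteq> \<U>" "\<B>2 \<subseteq> \<U>"
    and Int: "\<B>1 \<inter> \<B>2 \<subseteq> {C}"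
  shows "\<exists>\<V>1 \<V>2. omega_cover X \<V>1 \<and> omega_cover X \<V>2 \<and> \<V>1 \<inter> \<V>2 = {} \<and> \<V>1 \<union> \<V>2 = \<U>"
proof (intro exI conjI)
  show "omega_cover X (\<B>1 - {C})"
    using omega_cover_Diff_singleton[OF \<B>(1)] .
  have "\<B>2 \<subseteq> \<U> - (\<B>1 - {C})"
    using \<B>(4) Int by blast
  then show "omega_cover X (\<U> - (\<B>1 - {C}))"
    using omega_cover_intermediate[OF \<B>(2) \<U> _ Diff_subset] by blast
qed (use \<B> in auto)

lemma obtain_trichotomy_colouring:
  obtains f :: "'a \<times> 'a \<Rightarrow> nat" where "range f \<subseteq> {1..3}"
    and "\<And>a b. a \<noteq> b \<Longrightarrow> f (a, a) \<noteq> f (a, b) \<and> f (a, a) \<noteq> f (b, a) \<and> f (a, b) \<noteq> f (b, a)"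
proof -
  obtain r :: "'a rel" where r: "Well_order r" "Field r = UNIV"
    using well_ordering by (elim exE conjE)
  have flip: "(a, b) \<in> r \<longleftrightarrow> (b, a) \<notin> r" if "a \<noteq> b" for a b
    using Linear_order_in_diff_Id[of r a b] r that unfolding well_order_on_def by auto
  define f where "f = (\<lambda>(a, b). if a = b then 2 else if (a, b) \<in> r then 1 else 3 :: nat)"
  show thesis
  proof
    show "range f \<subseteq> {1..3}"
      unfolding f_def by auto
    show "f (a, a) \<noteq> f (a, b) \<and> f (a, a) \<noteq> f (b, a) \<and> f (a, b) \<noteq> f (b, a)"
      if "a \<noteq> b" for a b
      using flip[OF that] that unfolding f_def by auto
  qed
qed

lemma Int_subset_singleton_if_few_colours:
  assumes "finite (f ` (A \<times> B))" "card (f ` (A \<times> B)) < 3"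
    and f: "\<And>a b. a \<noteq> b \<Longrightarrow> f (a, a) \<noteq> f (a, b) \<and> f (a, a) \<noteq> f (b, a) \<and> f (a, b) \<noteq> f (b, a)"
  shows "\<exists>c. A \<inter> B \<subseteq> {c}"
proof -
  have same: "a = b" if "a \<in> A \<inter> B" "b \<in> A \<inter> B" for a b
  proof (rule ccontr)
    assume "a \<noteq> b"
    then have "card {f (a, a), f (a, b), f (b, a)} = 3"
      using f by simp
    moreover have "card {f (a, a), f (a, b), f (b, a)} \<le> card (f ` (A \<times> B))"
      using that by (intro card_mono[OF assms(1)]) auto
    ultimately show False
      using assms(2) by linarith
  qed
  show ?thesis
  proof (cases "A \<inter> B = {}")
    case False
    then obtain c where "c \<in> A \<inter> B"
      by blast
    then have "A \<inter> B \<subseteq> {c}"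
      using same by auto
    then show ?thesis ..
  qed simp
qed

theorem theorem9p4:
  fixes X :: "'a topology"
  assumes "Hausdorff_space X"
    and "\<And>n::nat. n \<ge> 1 \<Longrightarrow> Lindelof_space (product_topology (\<lambda>_. X) {..<n})"
    and "\<And>k::nat. k \<ge> 1 \<Longrightarrow> polarized_Omega_k_lt3 X k"
  shows "Split_Omega_Omega X"
  unfolding Split_Omega_Omega_def
proof (intro allI impI)
  fix \<U> assume \<U>: "omega_cover X \<U>"
  obtain f :: "'a set \<times> 'a set \<Rightarrow> nat" where f_range: "range f \<subseteq> {1..3}"
    and f: "\<And>a b. a \<noteq> b \<Longrightarrow> f (a, a) \<noteq> f (a, b) \<and> f (a, a) \<noteq> f (b, a) \<and> f (a, b) \<noteq> f (b, a)"
    using obtain_trichotomy_colouring by blast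
  have "f ` (\<U> \<times> \<U>) \<subseteq> {1..3}"
    using f_range by blast
  then obtain \<B>1 \<B>2 where \<B>: "\<B>1 \<subseteq> \<U>" "\<B>2 \<subseteq> \<U>" "omega_cover X \<B>1" "omega_cover X \<B>2"
    and few: "card (f ` (\<B>1 \<times> \<B>2)) < 3"
    using assms(3)[of 3, unfolded polarized_Omega_k_lt3_def, rule_format, of \<U> \<U> f] \<U>
    by auto
  have "finite (f ` (\<B>1 \<times> \<B>2))"
    by (rule finite_subset[of _ "{1..3}"]) (use f_range in blast, simp)
  then obtain C where "\<B>1 \<inter> \<B>2 \<subseteq> {C}"
    using Int_subset_singleton_if_few_colours[OF _ few f] by blast
  then show "\<exists>\<V>1 \<V>2. omega_cover X \<V>1 \<and> omega_cover X \<V>2 \<and> \<V>1 \<inter> \<V>2 = {} \<and> \<V>1 \<union> \<V>2 = \<U>"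
    by (rule omega_cover_split_if_Int_subset_singleton[OF \<U> \<B>(3,4,1,2)])
qed

end
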